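(* Let $R$ be a commutative ring with nonzero identity, $\delta$ an expansion of ideals of $R$, and $I$ a proper ideal of $R$ with $I\subseteq\sqrt{0}$. If $I$ is a $\delta$-primary ideal of $R$, then $I$ is a $\delta$-$n$-ideal of $R$. Conversely, if $I=\sqrt{0}$ and $I$ is a $\delta$-$n$-ideal, then $I$ is $\delta$-primary.
   Context: An expansion of ideals of a ring $R$ is a map $\delta$ from the set of ideals of $R$ to itself such that $I\subseteq\delta(I)$ for every ideal $I$, and $\delta(I)\subseteq\delta(J)$ whenever $I\subseteq J$. $\sqrt{0}$ denotes the nilradical of $R$. Given an expansion $\delta$, a proper ideal $I$ of $R$ is a $\delta$-$n$-ideal if whenever $a,b\in R$ with $ab\in I$ and $a\notin\sqrt{0}$, then $b\in\delta(I)$; it is $\delta$-primary if whenever $a,b\in R$ with $ab\in I$ and $a\notin I$, then $b\in\delta(I)$. *)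

theory Defs
  imports "HOL-Algebra.Algebra"
begin

definition nilradical :: "('a, 'b) ring_scheme \<Rightarrow> 'a set" where
  "nilradical R = {a \<in> carrier R. \<exists>n::nat. a [^]\<^bsub>R\<^esub> n = \<zero>\<^bsub>R\<^esub>}"

definition expansion :: "('a, 'b) ring_scheme \<Rightarrow> ('a set \<Rightarrow> 'a set) \<Rightarrow> bool" where
  "expansion R \<delta> \<longleftrightarrow>
     (\<forall>I. ideal I R \<longrightarrow> ideal (\<delta> I) R \<and> I \<subseteq> \<delta> I) \<and>
     (\<forall>I J. ideal I R \<longrightarrow> ideal J R \<longrightarrow> I \<subseteq> J \<longrightarrow> \<delta> I \<subseteq> \<delta> J)"

definition delta_n_ideal :: "('a, 'b) ring_scheme \<Rightarrow> ('a set \<Rightarrow> 'a set) \<Rightarrow> 'a set \<Rightarrow> bool" where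
  "delta_n_ideal R \<delta> I \<longleftrightarrow> ideal I R \<and> I \<noteq> carrier R \<and>
     (\<forall>a \<in> carrier R. \<forall>b \<in> carrier R.
        a \<otimes>\<^bsub>R\<^esub> b \<in> I \<longrightarrow> a \<notin> nilradical R \<longrightarrow> b \<in> \<delta> I)"

definition delta_primary :: "('a, 'b) ring_scheme \<Rightarrow> ('a set \<Rightarrow> 'a set) \<Rightarrow> 'a set \<Rightarrow> bool" where
  "delta_primary R \<delta> I \<longleftrightarrow> ideal I R \<and> I \<noteq> carrier R \<and>
     (\<forall>a \<in> carrier R. \<forall>b \<in> carrier R.
        a \<otimes>\<^bsub>R\<^esub> b \<in> I \<longrightarrow> a \<notin> I \<longrightarrow> b \<in> \<delta> I)"

end

theory Submission
  imports Defs
begin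

lemma delta_primary_imp_delta_n_ideal:
  assumes "delta_primary R \<delta> I" and "I \<subseteq> nilradical R"
  shows "delta_n_ideal R \<delta> I"
  using assms unfolding delta_primary_def delta_n_ideal_def by blast

lemma delta_n_ideal_imp_delta_primary:
  assumes "delta_n_ideal R \<delta> I" and "I = nilradical R"
  shows "delta_primary R \<delta> I"
  using assms unfolding delta_primary_def delta_n_ideal_def by blast

text \<open>Both directions are pure comparisons of the hypotheses "a \<notin> I" and "a \<notin> nilradical R".\<close>

theorem proposition2p4:
  fixes R (structure) and \<delta> :: "'a set \<Rightarrow> 'a set" and I :: "'a set"
  assumes "cring R" and "\<one> \<noteq> \<zero>"
    and "expansion R \<delta>"
    and "ideal I R" and "I \<noteq> carrier R"
    and "I \<subseteq> nilradical R"
  shows "(delta_primary R \<delta> I \<longrightarrow> delta_n_ideal R \<delta> I)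
       \<and> (I = nilradical R \<and> delta_n_ideal R \<delta> I \<longrightarrow> delta_primary R \<delta> I)"
  using assms(6) delta_primary_imp_delta_n_ideal delta_n_ideal_imp_delta_primary by blast

end
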